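(* Let $G$ be a graph and $a\neq b$ vertices of $G$. The pair state $e_a-e_b$ is fixed if and only if $a$ and $b$ are twins in $G$, i.e. $N(a)\setminus\{b\}=N(b)\setminus\{a\}$.
   Context: $N(v)$ denotes the set of neighbours of $v$. With $L=\Delta-A$ the Laplacian of $G$ and $U(t)=\exp(itL)$, the pair state $e_a-e_b$ is fixed if for every $t\ge 0$ there is $\gamma\in\mathbb{C}$ with $|\gamma|=1$ (possibly depending on $t$) such that $U(t)(e_a-e_b)=\gamma(e_a-e_b)$. *)

theory Defs
  imports "HOL-Analysis.Analysis"
begin

text \<open>A finite simple graph: vertices form a finite type 'a, adjacency is a
symmetric irreflexive relation E.  Vectors in C^V are functions 'a => complex.\<close>

definition nbhd :: "('a \<Rightarrow> 'a \<Rightarrow> bool) \<Rightarrow> 'a \<Rightarrow> 'a set" where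
  "nbhd E v = {u. E v u}"

definition laplacian :: "('a::finite \<Rightarrow> 'a \<Rightarrow> bool) \<Rightarrow> ('a \<Rightarrow> complex) \<Rightarrow> ('a \<Rightarrow> complex)" where
  "laplacian E f = (\<lambda>x. of_nat (card (nbhd E x)) * f x - (\<Sum>y\<in>nbhd E x. f y))"

definition evolve :: "('a::finite \<Rightarrow> 'a \<Rightarrow> bool) \<Rightarrow> real \<Rightarrow> ('a \<Rightarrow> complex) \<Rightarrow> ('a \<Rightarrow> complex)" where
  "evolve E t f = (\<lambda>x. (\<Sum>k. (\<i> * complex_of_real t) ^ k / of_nat (fact k) * ((laplacian E ^^ k) f) x))"

definition unit_vec :: "'a \<Rightarrow> 'a \<Rightarrow> complex" where
  "unit_vec a = (\<lambda>x. if x = a then 1 else 0)"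

definition pair_state :: "'a \<Rightarrow> 'a \<Rightarrow> 'a \<Rightarrow> complex" where
  "pair_state a b = (\<lambda>x. unit_vec a x - unit_vec b x)"

definition pair_fixed :: "('a::finite \<Rightarrow> 'a \<Rightarrow> bool) \<Rightarrow> 'a \<Rightarrow> 'a \<Rightarrow> bool" where
  "pair_fixed E a b = (\<forall>t::real. t \<ge> 0 \<longrightarrow>
     (\<exists>\<gamma>::complex. cmod \<gamma> = 1 \<and> evolve E t (pair_state a b) = (\<lambda>x. \<gamma> * pair_state a b x)))"

end

theory Submission
  imports Defs
begin

(* If a and b are twins, e_a - e_b is an eigenvector of L with eigenvalue deg a + [a ~ b], so
   U(t) only multiplies it by the phase exp (i t (deg a + [a ~ b])).  Conversely, if e_a - e_b is
   fixed, then for every vertex x other than a and b the entry (U(t) (e_a - e_b)) x vanishes for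
   all t >= 0.  As a power series in t its linear coefficient is i (L (e_a - e_b)) x =
   i ([x ~ b] - [x ~ a]), and a convergent power series vanishing on a ray has zero linear
   coefficient, since its one-sided derivative at 0 is zero.  So every such x is adjacent to both
   a and b or to neither. *)

lemma powser_linear_coeff_eq_0_if_vanishes_on_ray:
  fixes c :: "nat \<Rightarrow> 'a::{real_normed_field,banach}"
  assumes summable: "summable c"
    and vanishes: "\<And>t. 0 \<le> t \<Longrightarrow> (\<Sum>n. c n * of_real t ^ n) = 0"
  shows "c 1 = 0"
proof -
  let ?f = "\<lambda>t. \<Sum>n. c n * of_real t ^ n"
  have "DERIV (\<lambda>z. \<Sum>n. c n * z ^ n) 0 :> c 1"
    using termdiffs_strong[of c 1 0] summable by (simp add: diffs_def)
  then have "(?f has_vector_derivative c 1) (at 0 within {0..})"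
    using has_vector_derivative_real_field[of _ _ 0] by simp
  moreover have "(?f has_vector_derivative 0) (at 0 within {0..})"
    by (rule has_vector_derivative_transform_within[OF has_vector_derivative_const zero_less_one])
       (use vanishes in auto)
  ultimately show ?thesis
    by (rule vector_derivative_unique_within[rotated]) (simp add: at_within_Ici_at_right)
qed

lemma norm_laplacian_le:
  fixes E :: "'a::finite \<Rightarrow> 'a \<Rightarrow> bool"
  assumes bound: "\<And>y. cmod (g y) \<le> B"
  shows "cmod (laplacian E g x) \<le> 2 * real CARD('a) * B"
proof -
  have "0 \<le> B" using bound[of x] norm_ge_zero order_trans by blast
  have deg: "real (card (nbhd E x)) \<le> real CARD('a)" by (simp add: card_mono)
  have "cmod (of_nat (card (nbhd E x)) * g x) \<le> real CARD('a) * B"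
    unfolding norm_mult norm_of_nat using deg bound \<open>0 \<le> B\<close> by (intro mult_mono) auto
  moreover have "cmod (\<Sum>y\<in>nbhd E x. g y) \<le> real CARD('a) * B"
  proof -
    have "cmod (\<Sum>y\<in>nbhd E x. g y) \<le> (\<Sum>y\<in>nbhd E x. cmod (g y))"
      by (rule norm_sum)
    also have "\<dots> \<le> (\<Sum>y\<in>nbhd E x. B)" using bound by (rule sum_mono)
    also have "\<dots> \<le> real CARD('a) * B" using deg \<open>0 \<le> B\<close> by (simp add: mult_right_mono)
    finally show ?thesis .
  qed
  ultimately show ?thesis unfolding laplacian_def
    using norm_triangle_ineq4[of "of_nat (card (nbhd E x)) * g x" "sum g (nbhd E x)"] by linarith
qed

lemma norm_laplacian_power_le:
  fixes E :: "'a::finite \<Rightarrow> 'a \<Rightarrow> bool"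
  assumes "\<And>y. cmod (g y) \<le> B"
  shows "cmod ((laplacian E ^^ k) g x) \<le> (2 * real CARD('a)) ^ k * B"
proof (induction k arbitrary: x)
  case 0
  then show ?case using assms by simp
next
  case (Suc k)
  then show ?case using norm_laplacian_le[of "(laplacian E ^^ k) g"] by (simp add: mult.assoc)
qed

lemma evolve_eq_powser:
  "evolve E t g x = (\<Sum>k. (\<i> ^ k / fact k * (laplacian E ^^ k) g x) * of_real t ^ k)"
  unfolding evolve_def by (simp add: power_mult_distrib mult_ac)

lemma summable_evolve_powser:
  fixes E :: "'a::finite \<Rightarrow> 'a \<Rightarrow> bool"
  shows "summable (\<lambda>k. (\<i> ^ k / fact k * (laplacian E ^^ k) g x) * z ^ k)"
proof -
  define B where "B = (\<Sum>y\<in>UNIV. cmod (g y))"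
  define M where "M = 2 * real CARD('a)"
  have "cmod (g y) \<le> B" for y
    unfolding B_def by (rule member_le_sum) auto
  then have power_bound: "cmod ((laplacian E ^^ k) g x) \<le> M ^ k * B" for k
    unfolding M_def by (rule norm_laplacian_power_le)
  have term_bound: "norm ((\<i> ^ k / fact k * (laplacian E ^^ k) g x) * z ^ k)
      \<le> inverse (fact k) * (cmod z * M) ^ k * B" for k
  proof -
    have "norm ((\<i> ^ k / fact k * (laplacian E ^^ k) g x) * z ^ k)
        = inverse (fact k) * cmod z ^ k * cmod ((laplacian E ^^ k) g x)"
      by (simp add: norm_mult norm_divide norm_power field_simps)
    also have "\<dots> \<le> inverse (fact k) * cmod z ^ k * (M ^ k * B)"
      using power_bound by (intro mult_left_mono) auto
    finally show ?thesis by (simp add: power_mult_distrib mult_ac)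
  qed
  have "summable (\<lambda>k. inverse (fact k) * (cmod z * M) ^ k * B)"
    by (intro summable_mult2 summable_exp)
  then show ?thesis
    using term_bound by (rule summable_comparison_test'[where N=0])
qed

lemma laplacian_eq_0_if_evolve_vanishes:
  fixes E :: "'a::finite \<Rightarrow> 'a \<Rightarrow> bool"
  assumes "\<And>t. 0 \<le> t \<Longrightarrow> evolve E t g x = 0"
  shows "laplacian E g x = 0"
  using powser_linear_coeff_eq_0_if_vanishes_on_ray[OF summable_evolve_powser[of E g x 1]]
    assms unfolding evolve_eq_powser by simp

lemma laplacian_scale: "laplacian E (\<lambda>x. c * g x) = (\<lambda>x. c * laplacian E g x)"
  unfolding laplacian_def by (auto simp: algebra_simps sum_distrib_left)

lemma laplacian_power_eigenvector:
  assumes "laplacian E g = (\<lambda>x. \<mu> * g x)"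
  shows "(laplacian E ^^ k) g = (\<lambda>x. \<mu> ^ k * g x)"
  by (induction k) (simp_all add: laplacian_scale assms mult.assoc mult.left_commute)

lemma evolve_eigenvector:
  fixes E :: "'a::finite \<Rightarrow> 'a \<Rightarrow> bool"
  assumes "laplacian E g = (\<lambda>x. \<mu> * g x)"
  shows "evolve E t g = (\<lambda>x. exp (\<i> * of_real t * \<mu>) * g x)"
proof
  fix x
  have "(\<lambda>k. (\<i> * of_real t * \<mu>) ^ k /\<^sub>R fact k * g x) sums (exp (\<i> * of_real t * \<mu>) * g x)"
    by (rule sums_mult2[OF exp_converges])
  then show "evolve E t g x = exp (\<i> * of_real t * \<mu>) * g x"
    unfolding evolve_def laplacian_power_eigenvector[OF assms]
    by (simp add: sums_iff scaleR_conv_of_real power_mult_distrib divide_inverse mult_ac)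
qed

lemma laplacian_pair_state:
  fixes E :: "'a::finite \<Rightarrow> 'a \<Rightarrow> bool"
  shows "laplacian E (pair_state a b) x = of_nat (card (nbhd E x)) * pair_state a b x
     - ((if E x a then 1 else 0) - (if E x b then 1 else 0))"
  unfolding laplacian_def pair_state_def unit_vec_def
  by (simp add: sum_subtractf sum.delta' nbhd_def)

lemma card_nbhd_eq_card_Diff_add:
  fixes E :: "'a::finite \<Rightarrow> 'a \<Rightarrow> bool"
  shows "card (nbhd E v) = card (nbhd E v - {w}) + (if E v w then 1 else 0)"
proof (cases "E v w")
  case True
  then have "w \<in> nbhd E v" by (simp add: nbhd_def)
  then show ?thesis using True card_Suc_Diff1[of "nbhd E v" w] by simp
qed (simp add: nbhd_def)

lemma nbhd_Diff_eq_iff: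
  assumes sym: "\<And>x y. E x y \<Longrightarrow> E y x" and irrefl: "\<And>x. \<not> E x x"
  shows "nbhd E a - {b} = nbhd E b - {a} \<longleftrightarrow> (\<forall>x. x \<noteq> a \<longrightarrow> x \<noteq> b \<longrightarrow> E x a = E x b)"
proof -
  have "nbhd E v - {w} = {x. x \<noteq> v \<and> x \<noteq> w \<and> E x v}" for v w
    unfolding nbhd_def using sym irrefl by blast
  then show ?thesis by auto
qed

lemma card_nbhd_eq_if_twins:
  fixes E :: "'a::finite \<Rightarrow> 'a \<Rightarrow> bool"
  assumes sym: "\<And>x y. E x y \<Longrightarrow> E y x" and twins: "nbhd E a - {b} = nbhd E b - {a}"
  shows "card (nbhd E a) = card (nbhd E b)"
proof -
  have "card (nbhd E a) = card (nbhd E a - {b}) + (if E a b then 1 else 0)"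
    by (rule card_nbhd_eq_card_Diff_add)
  also have "\<dots> = card (nbhd E b - {a}) + (if E b a then 1 else 0)"
    using twins sym by auto
  also have "\<dots> = card (nbhd E b)"
    by (rule card_nbhd_eq_card_Diff_add[symmetric])
  finally show ?thesis .
qed

lemma twins_pair_state_eigenvector:
  fixes E :: "'a::finite \<Rightarrow> 'a \<Rightarrow> bool"
  assumes sym: "\<And>x y. E x y \<Longrightarrow> E y x" and irrefl: "\<And>x. \<not> E x x"
    and "a \<noteq> b" and twins: "nbhd E a - {b} = nbhd E b - {a}"
  shows "laplacian E (pair_state a b)
    = (\<lambda>x. of_nat (card (nbhd E a) + (if E a b then 1 else 0)) * pair_state a b x)"
proof
  fix x
  have "E b a = E a b" using sym by blast
  consider "x = a" | "x = b" | "x \<noteq> a" "x \<noteq> b" by blast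
  then show "laplacian E (pair_state a b) x
      = of_nat (card (nbhd E a) + (if E a b then 1 else 0)) * pair_state a b x"
  proof cases
    case 1
    then show ?thesis using \<open>a \<noteq> b\<close> irrefl[of a]
      unfolding laplacian_pair_state by (simp add: pair_state_def unit_vec_def)
  next
    case 2
    then show ?thesis
      using \<open>a \<noteq> b\<close> irrefl[of b] \<open>E b a = E a b\<close> card_nbhd_eq_if_twins[of E a b, OF sym twins]
      unfolding laplacian_pair_state by (simp add: pair_state_def unit_vec_def)
  next
    case 3
    then have "E x a = E x b" using twins nbhd_Diff_eq_iff[of E a b, OF sym irrefl] by blast
    then show ?thesis using 3
      unfolding laplacian_pair_state by (simp add: pair_state_def unit_vec_def)
  qed
qed

theorem mainTheorem9:
  fixes E :: "'a::finite \<Rightarrow> 'a \<Rightarrow> bool" and a b :: 'a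
  assumes sym: "\<And>x y. E x y \<Longrightarrow> E y x"
    and irrefl: "\<And>x. \<not> E x x"
    and ab: "a \<noteq> b"
  shows "pair_fixed E a b \<longleftrightarrow> nbhd E a - {b} = nbhd E b - {a}"
proof
  assume fixed: "pair_fixed E a b"
  have "E x a = E x b" if "x \<noteq> a" "x \<noteq> b" for x
  proof -
    have off_support: "pair_state a b x = 0" using that by (simp add: pair_state_def unit_vec_def)
    have "evolve E t (pair_state a b) x = 0" if "0 \<le> t" for t
    proof -
      obtain \<gamma> where "evolve E t (pair_state a b) = (\<lambda>x. \<gamma> * pair_state a b x)"
        using fixed \<open>0 \<le> t\<close> unfolding pair_fixed_def by blast
      then show ?thesis using off_support by simp
    qed
    then have "laplacian E (pair_state a b) x = 0" by (rule laplacian_eq_0_if_evolve_vanishes)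
    then show ?thesis using off_support unfolding laplacian_pair_state by (auto split: if_splits)
  qed
  then show "nbhd E a - {b} = nbhd E b - {a}"
    using nbhd_Diff_eq_iff[of E a b, OF sym irrefl] by blast
next
  assume "nbhd E a - {b} = nbhd E b - {a}"
  then obtain d :: nat where "laplacian E (pair_state a b) = (\<lambda>x. of_nat d * pair_state a b x)"
    using twins_pair_state_eigenvector[of E a b, OF sym irrefl ab] by blast
  then have "evolve E t (pair_state a b) = (\<lambda>x. exp (\<i> * of_real (t * d)) * pair_state a b x)"
    for t by (simp add: evolve_eigenvector mult.assoc)
  then show "pair_fixed E a b" unfolding pair_fixed_def using norm_exp_i_times by blast
qed

end
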